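(* Let $G$ be a graph on $n$ vertices with a Hamilton cycle $C$, let $k\ge 2$ divide $n$, let $s \ge n/k$, and let $\Pi$ be a noncanonical $(k,s)$-BCP of $G$, with spanning trees $T_i$, centers $c_i$ and heavy/light fragments fixed as in the context. If some light fragment of a large district is adjacent along $C$ (i.e., joined by an edge of $C$) to a vertex of a small district, then there is a single recombination move producing a $(k,s)$-BCP whose total number of fragments is strictly smaller than that of $\Pi$.
   Context: A $(k,s)$-BCP of a graph $G$ on $n$ vertices is a partition of $V(G)$ into $k$ nonempty sets (districts), each inducing a connected subgraph, with $\big||U|-n/k\big|\le s$ for every district $U$. A recombination move replaces two districts $V_i,V_j$ by two sets $W_i,W_j$ with $W_i\cup W_j=V_i\cup V_j$ such that the result is again a $(k,s)$-BCP (different from the original), leaving other districts unchanged. Given a Hamilton cycle $C$: the partition is canonical if every district consists of consecutive vertices along $C$. A fragment of a district $V_i$ is a maximal subset of $V_i$ of vertices contiguous along $C$; $f_i$ denotes the number of fragments of $V_i$, and the total number of fragments is $\sum_i f_i$. A district is small if $|V_i|\le n/k$ and large otherwise. An edge of $G$ not on $C$ is a chord. For each $i$, $T_i$ is a fixed spanning tree of $G[V_i]$ with the minimum number of chords (it consists of the $f_i$ paths along $C$ plus $f_i-1$ chords), and $c_i$ is a fixed center of $T_i$, i.e., a vertex such that every component of $T_i-c_i$ has at most $|V_i|/2$ vertices. The fragment of $V_i$ containing $c_i$ is heavy; the others are light. *)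

theory Defs
  imports Complex_Main
begin

definition simple_graph :: "'a set \<Rightarrow> ('a \<Rightarrow> 'a \<Rightarrow> bool) \<Rightarrow> bool" where
  "simple_graph V E \<longleftrightarrow> finite V \<and> (\<forall>u v. E u v \<longrightarrow> E v u) \<and> (\<forall>u. \<not> E u u)
     \<and> (\<forall>u v. E u v \<longrightarrow> u \<in> V \<and> v \<in> V)"

definition hamilton_cycle :: "'a set \<Rightarrow> ('a \<Rightarrow> 'a \<Rightarrow> bool) \<Rightarrow> 'a list \<Rightarrow> bool" where
  "hamilton_cycle V E C \<longleftrightarrow> distinct C \<and> set C = V \<and> length C \<ge> 3
     \<and> (\<forall>i < length C. E (C ! i) (C ! ((i + 1) mod length C)))"

definition cedge :: "'a list \<Rightarrow> 'a \<Rightarrow> 'a \<Rightarrow> bool" where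
  "cedge C u v \<longleftrightarrow> (\<exists>i < length C. {u, v} = {C ! i, C ! ((i + 1) mod length C)})"

definition reach :: "('a \<Rightarrow> 'a \<Rightarrow> bool) \<Rightarrow> 'a set \<Rightarrow> 'a \<Rightarrow> 'a \<Rightarrow> bool" where
  "reach R S x y \<longleftrightarrow> (x, y) \<in> {(a, b). a \<in> S \<and> b \<in> S \<and> R a b}\<^sup>*"

definition connected_on :: "('a \<Rightarrow> 'a \<Rightarrow> bool) \<Rightarrow> 'a set \<Rightarrow> bool" where
  "connected_on R S \<longleftrightarrow> S \<noteq> {} \<and> (\<forall>x\<in>S. \<forall>y\<in>S. reach R S x y)"

definition comps :: "('a \<Rightarrow> 'a \<Rightarrow> bool) \<Rightarrow> 'a set \<Rightarrow> 'a set set" where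
  "comps R S = (\<lambda>x. {y \<in> S. reach R S x y}) ` S"

definition is_BCP :: "'a set \<Rightarrow> ('a \<Rightarrow> 'a \<Rightarrow> bool) \<Rightarrow> nat \<Rightarrow> real \<Rightarrow> (nat \<Rightarrow> 'a set) \<Rightarrow> bool" where
  "is_BCP V E k s P \<longleftrightarrow>
     (\<forall>i < k. P i \<noteq> {} \<and> P i \<subseteq> V \<and> connected_on E (P i)
              \<and> \<bar>real (card (P i)) - real (card V) / real k\<bar> \<le> s)
     \<and> (\<forall>i < k. \<forall>j < k. i \<noteq> j \<longrightarrow> P i \<inter> P j = {})
     \<and> (\<Union>i<k. P i) = V"

definition recomb_move :: "'a set \<Rightarrow> ('a \<Rightarrow> 'a \<Rightarrow> bool) \<Rightarrow> nat \<Rightarrow> real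
     \<Rightarrow> (nat \<Rightarrow> 'a set) \<Rightarrow> nat \<Rightarrow> nat \<Rightarrow> (nat \<Rightarrow> 'a set) \<Rightarrow> bool" where
  "recomb_move V E k s P i j P' \<longleftrightarrow>
     i < k \<and> j < k \<and> i \<noteq> j
     \<and> P' i \<union> P' j = P i \<union> P j
     \<and> (\<forall>l < k. l \<noteq> i \<and> l \<noteq> j \<longrightarrow> P' l = P l)
     \<and> is_BCP V E k s P'
     \<and> P' ` {..<k} \<noteq> P ` {..<k}"

text \<open>Fragments of a set D: maximal C-contiguous subsets, i.e. components of D w.r.t. cycle edges.\<close>
definition fragments :: "'a list \<Rightarrow> 'a set \<Rightarrow> 'a set set" where
  "fragments C D = comps (cedge C) D"

definition total_fragments :: "'a list \<Rightarrow> nat \<Rightarrow> (nat \<Rightarrow> 'a set) \<Rightarrow> nat" where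
  "total_fragments C k P = (\<Sum>i<k. card (fragments C (P i)))"

text \<open>Canonical: every district consists of consecutive vertices along C (a single fragment).\<close>
definition canonical :: "'a list \<Rightarrow> nat \<Rightarrow> (nat \<Rightarrow> 'a set) \<Rightarrow> bool" where
  "canonical C k P \<longleftrightarrow> (\<forall>i < k. card (fragments C (P i)) = 1)"

text \<open>Trees are given as sets of edges, each edge a 2-element set.\<close>
definition tedge :: "'a set set \<Rightarrow> 'a \<Rightarrow> 'a \<Rightarrow> bool" where
  "tedge T u v \<longleftrightarrow> u \<noteq> v \<and> {u, v} \<in> T"

definition spanning_tree :: "('a \<Rightarrow> 'a \<Rightarrow> bool) \<Rightarrow> 'a set \<Rightarrow> 'a set set \<Rightarrow> bool" where
  "spanning_tree E S T \<longleftrightarrow>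
     T \<subseteq> {{u, v} | u v. u \<in> S \<and> v \<in> S \<and> E u v}
     \<and> connected_on (tedge T) S \<and> card T + 1 = card S"

definition chords :: "'a list \<Rightarrow> 'a set set \<Rightarrow> 'a set set" where
  "chords C T = {e \<in> T. \<not> (\<exists>u v. e = {u, v} \<and> cedge C u v)}"

definition min_chord_spanning_tree :: "('a \<Rightarrow> 'a \<Rightarrow> bool) \<Rightarrow> 'a list \<Rightarrow> 'a set \<Rightarrow> 'a set set \<Rightarrow> bool" where
  "min_chord_spanning_tree E C S T \<longleftrightarrow> spanning_tree E S T
     \<and> (\<forall>T'. spanning_tree E S T' \<longrightarrow> card (chords C T) \<le> card (chords C T'))"

definition tree_center :: "'a set \<Rightarrow> 'a set set \<Rightarrow> 'a \<Rightarrow> bool" where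
  "tree_center S T c \<longleftrightarrow> c \<in> S
     \<and> (\<forall>K \<in> comps (tedge T) (S - {c}). real (card K) \<le> real (card S) / 2)"

end

theory Submission
  imports Defs
begin

text \<open>Let u lie in a light fragment of the large district D and be joined along C to a vertex v
  of a small district. A minimum-chord spanning tree of D contains every cycle edge inside D:
  otherwise the fundamental cycle of that edge would contain a chord (cycle edges alone close a
  cycle only on all of V), and exchanging the chord for the cycle edge would save a chord. Let S
  be the part of the tree hanging at u once the heavy fragment H is removed. Then S is connected
  and a union of fragments of D, everything else in D still hangs on H, and S lies in a single
  branch of the tree at its center, so \<open>|S| \<le> |D|/2\<close>. Moving S to the small district keeps
  both districts balanced, splits the fragments of D into those of S and of \<open>D - S\<close>, and merges
  a fragment of S with one of the small district through the edge uv.\<close>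

section \<open>Reachability and components\<close>

definition component :: "('a \<Rightarrow> 'a \<Rightarrow> bool) \<Rightarrow> 'a set \<Rightarrow> 'a \<Rightarrow> 'a set" where
  "component R S x = {y \<in> S. reach R S x y}"

lemma comps_eq_image_component: "comps R S = component R S ` S"
  unfolding comps_def component_def by simp

lemma reach_refl [simp]: "reach R S x x"
  unfolding reach_def by simp

lemma reach_edge: "x \<in> S \<Longrightarrow> y \<in> S \<Longrightarrow> R x y \<Longrightarrow> reach R S x y"
  unfolding reach_def by (simp add: r_into_rtrancl)

lemma reach_trans: "reach R S x y \<Longrightarrow> reach R S y z \<Longrightarrow> reach R S x z"
  unfolding reach_def by (rule rtrancl_trans)

lemma reach_step: "reach R S x y \<Longrightarrow> y \<in> S \<Longrightarrow> z \<in> S \<Longrightarrow> R y z \<Longrightarrow> reach R S x z"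
  unfolding reach_def by (simp add: rtrancl.rtrancl_into_rtrancl)

lemma reach_sym:
  assumes "symp R" and "reach R S x y"
  shows "reach R S y x"
proof -
  have "{(a, b). a \<in> S \<and> b \<in> S \<and> R a b}\<inverse> = {(a, b). a \<in> S \<and> b \<in> S \<and> R a b}"
    using sympD[OF assms(1)] by blast
  moreover have "(y, x) \<in> ({(a, b). a \<in> S \<and> b \<in> S \<and> R a b}\<inverse>)\<^sup>*"
    using assms(2) unfolding reach_def by (simp add: rtrancl_converseI)
  ultimately show ?thesis unfolding reach_def by simp
qed

lemma reach_mono:
  assumes "reach R S x y" and "\<And>a b. a \<in> S \<Longrightarrow> b \<in> S \<Longrightarrow> R a b \<Longrightarrow> R' a b" and "S \<subseteq> S'"
  shows "reach R' S' x y"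
proof -
  have "{(a, b). a \<in> S \<and> b \<in> S \<and> R a b} \<subseteq> {(a, b). a \<in> S' \<and> b \<in> S' \<and> R' a b}"
    using assms(2,3) by auto
  from rtrancl_mono[OF this] show ?thesis
    using assms(1) unfolding reach_def by blast
qed

lemma reach_closed_subset:
  assumes "reach R D x y" and "x \<in> X" and "X \<subseteq> D"
    and closed: "\<And>a b. a \<in> X \<Longrightarrow> b \<in> D \<Longrightarrow> R a b \<Longrightarrow> b \<in> X"
  shows "y \<in> X \<and> reach R X x y"
proof -
  have "(x, y) \<in> {(a, b). a \<in> D \<and> b \<in> D \<and> R a b}\<^sup>*"
    using assms(1) unfolding reach_def .
  then show ?thesis
  proof (induction rule: rtrancl_induct)
    case (step y z)
    then have "y \<in> X" "z \<in> X" "R y z" and "reach R X x y" using closed by auto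
    then show ?case using reach_step by metis
  qed (use assms(2) in simp)
qed

lemma connected_on_reachI:
  assumes "symp R" and "x0 \<in> S" and "\<And>y. y \<in> S \<Longrightarrow> reach R S x0 y"
  shows "connected_on R S"
  unfolding connected_on_def
proof (intro conjI ballI)
  show "S \<noteq> {}" using assms(2) by auto
  fix x y assume "x \<in> S" "y \<in> S"
  then show "reach R S x y"
    using reach_trans[OF reach_sym[OF assms(1) assms(3)]] assms(3) by blast
qed

lemma connected_on_mono:
  assumes "connected_on R S" and "\<And>a b. a \<in> S \<Longrightarrow> b \<in> S \<Longrightarrow> R a b \<Longrightarrow> R' a b"
  shows "connected_on R' S"
  using assms unfolding connected_on_def by (blast intro: reach_mono)

lemma connected_on_closed_subset:
  assumes "connected_on R S" and "X \<subseteq> S" and "x \<in> X"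
    and "\<And>a b. a \<in> X \<Longrightarrow> b \<in> S \<Longrightarrow> R a b \<Longrightarrow> b \<in> X"
  shows "X = S"
  using assms reach_closed_subset[of R S x _ X] unfolding connected_on_def by blast

lemma connected_on_Un_edge:
  assumes "symp R" and "connected_on R A" and "connected_on R B"
    and "a \<in> A" and "b \<in> B" and "R a b"
  shows "connected_on R (A \<union> B)"
proof (rule connected_on_reachI[OF assms(1)])
  show "a \<in> A \<union> B" using assms(4) by simp
  have ab: "reach R (A \<union> B) a b" using assms(4-6) by (intro reach_edge) auto
  fix y assume "y \<in> A \<union> B"
  then show "reach R (A \<union> B) a y"
  proof
    assume "y \<in> A"
    then have "reach R A a y" using assms(2,4) unfolding connected_on_def by blast
    then show ?thesis by (rule reach_mono) auto
  next
    assume "y \<in> B"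
    then have "reach R B b y" using assms(3,5) unfolding connected_on_def by blast
    then have "reach R (A \<union> B) b y" by (rule reach_mono) auto
    with ab show ?thesis by (rule reach_trans)
  qed
qed

lemma mem_component: "x \<in> S \<Longrightarrow> x \<in> component R S x"
  unfolding component_def by simp

lemma component_subset: "component R S x \<subseteq> S"
  unfolding component_def by blast

lemma component_in_comps: "x \<in> S \<Longrightarrow> component R S x \<in> comps R S"
  unfolding comps_eq_image_component by simp

lemma finite_comps: "finite S \<Longrightarrow> finite (comps R S)"
  unfolding comps_def by simp

lemma component_closed:
  "a \<in> component R S x \<Longrightarrow> b \<in> S \<Longrightarrow> R a b \<Longrightarrow> b \<in> component R S x"
  unfolding component_def by (blast intro: reach_step)

lemma component_eq:
  assumes "symp R" and "reach R S x y"
  shows "component R S x = component R S y"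
  using assms reach_sym[OF assms] unfolding component_def by (blast intro: reach_trans)

lemma component_mono: "S \<subseteq> S' \<Longrightarrow> component R S x \<subseteq> component R S' x"
  unfolding component_def by (blast intro: reach_mono)

lemma component_closed_subset:
  assumes "X \<subseteq> D" and "x \<in> X" and "\<And>a b. a \<in> X \<Longrightarrow> b \<in> D \<Longrightarrow> R a b \<Longrightarrow> b \<in> X"
  shows "component R D x = component R X x"
proof
  show "component R D x \<subseteq> component R X x"
    unfolding component_def using reach_closed_subset[of R D x _ X] assms by blast
qed (rule component_mono[OF assms(1)])

lemma connected_on_component:
  assumes "symp R" and "x \<in> S"
  shows "connected_on R (component R S x)"
proof (rule connected_on_reachI[OF assms(1) mem_component[OF assms(2)]])
  fix y assume "y \<in> component R S x"
  then have "reach R S x y" unfolding component_def by simp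
  from reach_closed_subset[OF this mem_component[OF assms(2)] component_subset component_closed]
  show "reach R (component R S x) x y" by simp
qed

lemma comps_subset: "K \<in> comps R S \<Longrightarrow> K \<subseteq> S"
  unfolding comps_def by auto

lemma notin_component_if_comps:
  assumes "symp R" and "F \<in> comps R D" and "u \<in> F" and "c \<in> D" and "c \<notin> F"
  shows "u \<notin> component R D c"
proof
  assume "u \<in> component R D c"
  then have "reach R D c u" unfolding component_def by simp
  then have "component R D c = component R D u" by (rule component_eq[OF assms(1)])
  moreover obtain x where x: "F = component R D x"
    using assms(2) unfolding comps_eq_image_component by blast
  then have "reach R D x u" using assms(3) unfolding component_def by simp
  then have "component R D u = F" unfolding x by (rule component_eq[OF assms(1), symmetric])
  ultimately show False using mem_component[OF assms(4)] assms(5) by blast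
qed

lemma comps_connected_on: "connected_on R S \<Longrightarrow> comps R S = {S}"
  unfolding connected_on_def comps_eq_image_component component_def by auto

section \<open>Counting components\<close>

lemma card_comps_split_closed:
  assumes sym: "symp R" and "finite D" and "X \<subseteq> D"
    and closed: "\<And>a b. a \<in> X \<Longrightarrow> b \<in> D \<Longrightarrow> R a b \<Longrightarrow> b \<in> X"
  shows "card (comps R D) = card (comps R X) + card (comps R (D - X))"
proof -
  have closed': "b \<in> D - X" if "a \<in> D - X" "b \<in> D" "R a b" for a b
    using that closed[of b a] sympD[OF sym, of a b] by blast
  have "comps R D = component R D ` X \<union> component R D ` (D - X)"
    using \<open>X \<subseteq> D\<close> unfolding comps_eq_image_component by (simp add: Un_absorb1 flip: image_Un)
  also have "component R D ` X = comps R X"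
    unfolding comps_eq_image_component
  proof (rule image_cong)
    show "component R D x = component R X x" if "x \<in> X" for x
      by (rule component_closed_subset) (use assms(3) closed that in auto)
  qed simp
  also have "component R D ` (D - X) = comps R (D - X)"
    unfolding comps_eq_image_component
  proof (rule image_cong)
    show "component R D x = component R (D - X) x" if "x \<in> D - X" for x
      by (rule component_closed_subset) (use closed' that in auto)
  qed simp
  finally have split: "comps R D = comps R X \<union> comps R (D - X)" .
  have "comps R X \<inter> comps R (D - X) = {}"
    using component_subset mem_component unfolding comps_eq_image_component by fastforce
  moreover have "finite (comps R X)" "finite (comps R (D - X))"
    using assms(2,3) finite_subset by (auto intro: finite_comps)
  ultimately show ?thesis
    unfolding split by (simp add: card_Un_disjoint)
qed

definition reach_closure :: "('a \<Rightarrow> 'a \<Rightarrow> bool) \<Rightarrow> 'a set \<Rightarrow> 'a set \<Rightarrow> 'a set" where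
  "reach_closure R U K = {y \<in> U. \<exists>x\<in>K. reach R U x y}"

lemma reach_closure_component:
  assumes "X \<subseteq> U" and "x \<in> X"
  shows "reach_closure R U (component R X x) = component R U x"
proof -
  have mono: "reach R U x z" if "reach R X x z" for z
    using that by (rule reach_mono) (use assms(1) in auto)
  have "y \<in> reach_closure R U (component R X x) \<longleftrightarrow> y \<in> component R U x" for y
  proof
    assume "y \<in> reach_closure R U (component R X x)"
    then obtain z where "y \<in> U" "reach R X x z" "reach R U z y"
      unfolding reach_closure_def component_def by blast
    then have "reach R U x y" using mono reach_trans by metis
    with \<open>y \<in> U\<close> show "y \<in> component R U x"
      unfolding component_def by simp
  next
    assume "y \<in> component R U x"
    then show "y \<in> reach_closure R U (component R X x)"
      unfolding reach_closure_def component_def using assms(2) by auto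
  qed
  then show ?thesis by blast
qed

lemma card_comps_Un_edge_less:
  assumes sym: "symp R" and "finite A" and "finite B"
    and "a \<in> A" and "b \<in> B" and "R a b"
  shows "card (comps R (A \<union> B)) < card (comps R A) + card (comps R B)"
proof -
  let ?U = "A \<union> B"
  let ?grow = "reach_closure R ?U"
  have grow_component: "?grow (component R X x) = component R ?U x" if "X \<subseteq> ?U" "x \<in> X" for X x
    using that by (rule reach_closure_component)
  have ab: "component R ?U a = component R ?U b"
    using assms(4-6) by (intro component_eq[OF sym] reach_edge) auto
  have "comps R ?U \<subseteq> ?grow ` ((comps R A - {component R A a}) \<union> comps R B)"
  proof
    fix K assume "K \<in> comps R ?U"
    then obtain x where x: "x \<in> ?U" "K = component R ?U x"
      unfolding comps_eq_image_component by blast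
    consider "x \<in> A" "component R A x \<noteq> component R A a"
      | "x \<in> A" "component R A x = component R A a" | "x \<in> B"
      using x(1) by blast
    then show "K \<in> ?grow ` ((comps R A - {component R A a}) \<union> comps R B)"
    proof cases
      case 1
      then have "K = ?grow (component R A x)" using x(2) grow_component[of A x] by simp
      with 1 show ?thesis using component_in_comps[of x A R] by blast
    next
      case 2
      then have "K = component R ?U a"
        using x(2) grow_component[of A x] grow_component[of A a] assms(4) by simp
      then have "K = ?grow (component R B b)"
        using ab grow_component[of B b] assms(5) by simp
      then show ?thesis using component_in_comps[OF assms(5), of R] by blast
    next
      case 3
      then have "K = ?grow (component R B x)" using x(2) grow_component[of B x] by simp
      with 3 show ?thesis using component_in_comps[of x B R] by blast
    qed
  qed
  then have "card (comps R ?U) \<le> card (?grow ` ((comps R A - {component R A a}) \<union> comps R B))"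
    using assms(2,3) by (intro card_mono) (auto intro: finite_comps)
  also have "\<dots> \<le> card ((comps R A - {component R A a}) \<union> comps R B)"
    by (rule card_image_le) (use assms(2,3) in \<open>auto intro: finite_comps\<close>)
  also have "\<dots> \<le> card (comps R A - {component R A a}) + card (comps R B)"
    by (rule card_Un_le)
  also have "card (comps R A - {component R A a}) = card (comps R A) - 1"
    using component_in_comps[OF assms(4)] by (rule card_Diff_singleton)
  moreover have "card (comps R A) > 0"
    using component_in_comps[OF assms(4)] finite_comps[OF assms(2)] card_gt_0_iff by blast
  ultimately show ?thesis by linarith
qed

section \<open>Forests\<close>

lemma symp_tedge: "symp (tedge T)"
  unfolding tedge_def by (auto intro: sympI simp: insert_commute)

lemma tedge_mono: "F \<subseteq> F' \<Longrightarrow> tedge F x y \<Longrightarrow> tedge F' x y"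
  unfolding tedge_def by auto

lemma reach_tedge_mono: "reach (tedge F) S x y \<Longrightarrow> F \<subseteq> F' \<Longrightarrow> reach (tedge F') S x y"
  by (erule reach_mono) (auto intro: tedge_mono)

lemma reach_tedge_insert_cases:
  assumes "reach (tedge (insert {a, b} F)) S x y"
  shows "reach (tedge F) S x y \<or> (reach (tedge F) S x a \<and> reach (tedge F) S b y)
         \<or> (reach (tedge F) S x b \<and> reach (tedge F) S a y)"
proof -
  have "(x, y) \<in> {(u, v). u \<in> S \<and> v \<in> S \<and> tedge (insert {a, b} F) u v}\<^sup>*"
    using assms unfolding reach_def .
  then show ?thesis
  proof (induction rule: rtrancl_induct)
    case (step y z)
    then have "y \<in> S" "z \<in> S" and yz: "tedge F y z \<or> {y, z} = {a, b}"
      unfolding tedge_def by auto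
    show ?case
    proof (cases "tedge F y z")
      case True
      then show ?thesis
        using step.IH reach_step[OF _ \<open>y \<in> S\<close> \<open>z \<in> S\<close>] by blast
    next
      case False
      with yz have "(y = a \<and> z = b) \<or> (y = b \<and> z = a)" by (auto simp: doubleton_eq_iff)
      with step.IH show ?thesis by auto
    qed
  qed simp
qed

lemma comps_tedge_insert_reach:
  assumes "reach (tedge F) S a b"
  shows "comps (tedge (insert {a, b} F)) S = comps (tedge F) S"
proof -
  have "reach (tedge (insert {a, b} F)) S x y \<longleftrightarrow> reach (tedge F) S x y" for x y
    using reach_tedge_insert_cases[of a b F S x y] assms reach_sym[OF symp_tedge assms]
      reach_tedge_mono[of F S x y] reach_trans[of "tedge F" S] by blast
  then show ?thesis unfolding comps_def by simp
qed

lemma card_comps_tedge_insert_le: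
  assumes "finite S" and "a \<in> S" and "b \<in> S"
  shows "card (comps (tedge F) S) \<le> card (comps (tedge (insert {a, b} F)) S) + 1"
proof -
  let ?F' = "insert {a, b} F"
  let ?c = "component (tedge F) S" and ?c' = "component (tedge ?F') S"
  have "comps (tedge F) S \<subseteq> (comps (tedge ?F') S - {?c' a}) \<union> {?c a, ?c b}"
  proof
    fix K assume "K \<in> comps (tedge F) S"
    then obtain x where x: "x \<in> S" "K = ?c x"
      unfolding comps_eq_image_component by blast
    show "K \<in> (comps (tedge ?F') S - {?c' a}) \<union> {?c a, ?c b}"
    proof (cases "reach (tedge F) S x a \<or> reach (tedge F) S x b")
      case True
      then have "K = ?c a \<or> K = ?c b"
        using x(2) component_eq[where R = "tedge F" and S = S and x = x, OF symp_tedge] by blast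
      then show ?thesis by blast
    next
      case False
      then have "reach (tedge ?F') S x y \<longleftrightarrow> reach (tedge F) S x y" for y
        using reach_tedge_insert_cases[of a b F S x y] reach_tedge_mono[of F S x y ?F'] by auto
      then have "K = ?c' x" and "a \<notin> ?c' x"
        using x False unfolding component_def by auto
      then show ?thesis
        using mem_component[OF assms(2)] component_in_comps[OF x(1)] by blast
    qed
  qed
  moreover have fin: "finite (comps (tedge ?F') S)" using assms(1) by (rule finite_comps)
  ultimately have "card (comps (tedge F) S) \<le> card ((comps (tedge ?F') S - {?c' a}) \<union> {?c a, ?c b})"
    by (intro card_mono) auto
  also have "\<dots> \<le> card (comps (tedge ?F') S - {?c' a}) + card {?c a, ?c b}"
    by (rule card_Un_le)
  also have "\<dots> \<le> card (comps (tedge ?F') S) - 1 + 2"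
    using component_in_comps[OF assms(2)] by (simp add: card_insert_le_m1)
  moreover have "card (comps (tedge ?F') S) > 0"
    using component_in_comps[OF assms(2)] fin card_gt_0_iff by blast
  ultimately show ?thesis by linarith
qed

definition edges_on :: "'a set \<Rightarrow> 'a set set \<Rightarrow> bool" where
  "edges_on S T \<longleftrightarrow> (\<forall>e\<in>T. \<exists>x y. e = {x, y} \<and> x \<in> S \<and> y \<in> S)"

lemma card_comps_tedge_Un_le:
  assumes "finite S" and "finite D" and "edges_on S D"
  shows "card (comps (tedge F) S) \<le> card (comps (tedge (F \<union> D)) S) + card D"
  using assms(2,3)
proof (induction D rule: finite_induct)
  case (insert e D)
  then obtain a b where ab: "e = {a, b}" "a \<in> S" "b \<in> S" and "edges_on S D"
    unfolding edges_on_def by auto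
  from this(4) have "card (comps (tedge F) S) \<le> card (comps (tedge (F \<union> D)) S) + card D"
    by (rule insert.IH)
  moreover have "card (comps (tedge (F \<union> D)) S) \<le> card (comps (tedge (F \<union> insert e D)) S) + 1"
    using card_comps_tedge_insert_le[OF assms(1) ab(2,3), of "F \<union> D"] ab(1) by simp
  ultimately show ?case using insert(1,2) by simp
qed simp

lemma card_comps_tedge_empty: "card (comps (tedge {}) S) = card S"
proof -
  have "comps (tedge {}) S = (\<lambda>x. {x}) ` S"
    unfolding comps_eq_image_component component_def reach_def tedge_def by auto
  then show ?thesis by (simp add: card_image)
qed

lemma card_comps_subforest:
  assumes "finite S" and "finite T" and "edges_on S T" and "connected_on (tedge T) S"
    and "card T + 1 = card S" and "F \<subseteq> T"
  shows "card (comps (tedge F) S) + card F = card S"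
proof -
  have "finite F" "edges_on S F"
    using assms(2,3,6) finite_subset unfolding edges_on_def by auto
  then have "card S \<le> card (comps (tedge F) S) + card F"
    using card_comps_tedge_Un_le[OF assms(1), of F "{}"] card_comps_tedge_empty[of S] by simp
  moreover have "card (comps (tedge F) S) \<le> card (comps (tedge T) S) + card (T - F)"
  proof -
    have "edges_on S (T - F)" using assms(3) unfolding edges_on_def by blast
    from card_comps_tedge_Un_le[OF assms(1) _ this, of F] assms(2)
    show ?thesis by (simp add: Un_absorb1 assms(6))
  qed
  moreover have "card (comps (tedge T) S) = 1" using comps_connected_on[OF assms(4)] by simp
  moreover have "card (T - F) = card T - card F" "card F \<le> card T"
    using assms(2,6) \<open>finite F\<close> by (auto simp: card_Diff_subset card_mono)
  ultimately show ?thesis using assms(5) by linarith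
qed

section \<open>Spanning trees\<close>

locale finite_spanning_tree =
  fixes E :: "'a \<Rightarrow> 'a \<Rightarrow> bool" and S :: "'a set" and T :: "'a set set"
  assumes finite_S: "finite S" and spanning_tree: "spanning_tree E S T"
begin

lemma edges_on_T: "edges_on S T"
  using spanning_tree unfolding spanning_tree_def edges_on_def by blast

lemma finite_T: "finite T"
proof -
  have "T \<subseteq> (\<lambda>(u, v). {u, v}) ` (S \<times> S)"
    using edges_on_T unfolding edges_on_def by auto
  then show ?thesis using finite_S finite_subset by blast
qed

lemma connected_T: "connected_on (tedge T) S"
  and card_T: "card T + 1 = card S"
  using spanning_tree unfolding spanning_tree_def by blast+

lemma card_comps_delete_edge:
  assumes "e \<in> T"
  shows "card (comps (tedge (T - {e})) S) = 2"
proof -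
  have "card (comps (tedge (T - {e})) S) + card (T - {e}) = card S"
    by (rule card_comps_subforest[OF finite_S finite_T edges_on_T connected_T card_T]) auto
  moreover have "card (T - {e}) + 1 = card T"
    using assms finite_T card_Suc_Diff1 by fastforce
  ultimately show ?thesis using card_T by linarith
qed

lemma tree_edge_is_bridge:
  assumes "{a, b} \<in> T"
  shows "\<not> reach (tedge (T - {{a, b}})) S a b"
proof
  assume "reach (tedge (T - {{a, b}})) S a b"
  then have "comps (tedge T) S = comps (tedge (T - {{a, b}})) S"
    using comps_tedge_insert_reach assms by (metis insert_Diff)
  then have "comps (tedge (T - {{a, b}})) S = {S}"
    using comps_connected_on[OF connected_T] by simp
  then have "card (comps (tedge (T - {{a, b}})) S) = 1" by simp
  then show False
    using card_comps_delete_edge[OF assms] by simp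
qed

text \<open>Removing the edges of D one at a time, the first removal separating u from v would remove
  an edge that separates them already on its own.\<close>

lemma reach_Diff_edges:
  assumes "D \<subseteq> T" and "\<forall>e\<in>D. reach (tedge (T - {e})) S u v" and "u \<in> S" and "v \<in> S"
  shows "reach (tedge (T - D)) S u v"
proof -
  have "finite D" using assms(1) finite_T finite_subset by blast
  then show ?thesis
    using assms(1,2)
  proof (induction D rule: finite_induct)
    case empty
    then show ?case using connected_T assms(3,4) unfolding connected_on_def by simp
  next
    case (insert e D)
    obtain a b where e: "e = {a, b}" "e \<in> T"
      using insert.prems(1) edges_on_T unfolding edges_on_def by blast
    let ?G = "T - insert e D"
    have "T - D = insert {a, b} ?G" using e insert.hyps(2) by blast
    moreover have "reach (tedge (T - D)) S u v" using insert.IH insert.prems by blast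
    ultimately have IH: "reach (tedge (insert {a, b} ?G)) S u v" by simp
    have ue: "reach (tedge (T - {e})) S u v" using insert.prems(2) by blast
    have G: "?G \<subseteq> T - {e}" by blast
    show ?case
    proof (rule ccontr)
      assume "\<not> reach (tedge ?G) S u v"
      then have "(reach (tedge ?G) S u a \<and> reach (tedge ?G) S b v)
          \<or> (reach (tedge ?G) S u b \<and> reach (tedge ?G) S a v)"
        using reach_tedge_insert_cases[OF IH] by blast
      then have "reach (tedge (T - {e})) S a b"
        using reach_tedge_mono[OF _ G] ue reach_sym[OF symp_tedge] reach_trans by metis
      then show False using tree_edge_is_bridge e by simp
    qed
  qed
qed

lemma connected_on_tedge_exchange:
  assumes "e \<in> T" and "\<not> reach (tedge (T - {e})) S u v" and "u \<in> S" and "v \<in> S"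
  shows "connected_on (tedge (insert {u, v} (T - {e}))) S"
proof (rule connected_on_reachI[OF symp_tedge assms(3)])
  let ?F = "T - {e}" and ?F' = "insert {u, v} (T - {e})"
  let ?c = "component (tedge ?F) S"
  have "?c u \<noteq> ?c v"
    using assms(2) mem_component[OF assms(4)] unfolding component_def by blast
  moreover have "{?c u, ?c v} \<subseteq> comps (tedge ?F) S"
    using component_in_comps[OF assms(3)] component_in_comps[OF assms(4)] by blast
  ultimately have two: "comps (tedge ?F) S = {?c u, ?c v}"
    using card_comps_delete_edge[OF assms(1)] finite_comps[OF finite_S]
    by (metis card_2_iff card_subset_eq)
  have "u \<noteq> v" using assms(2) by auto
  then have ruv: "reach (tedge ?F') S u v"
    using assms(3,4) by (intro reach_edge) (auto simp: tedge_def)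
  fix y assume "y \<in> S"
  then have "y \<in> ?c u \<or> y \<in> ?c v"
    using two component_in_comps[OF \<open>y \<in> S\<close>] mem_component[OF \<open>y \<in> S\<close>] by blast
  then have "reach (tedge ?F) S u y \<or> reach (tedge ?F) S v y"
    unfolding component_def by blast
  moreover have "?F \<subseteq> ?F'" by blast
  ultimately show "reach (tedge ?F') S u y"
    using reach_tedge_mono[of ?F S u y ?F'] reach_tedge_mono[of ?F S v y ?F'] reach_trans[OF ruv]
    by blast
qed

lemma spanning_tree_exchange:
  assumes "e \<in> T" and "\<not> reach (tedge (T - {e})) S u v" and "u \<in> S" and "v \<in> S" and "E u v"
  shows "spanning_tree E S (insert {u, v} (T - {e}))"
proof (cases "{u, v} = e")
  case True
  then show ?thesis using assms(1) spanning_tree by (simp add: insert_absorb)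
next
  case False
  let ?F = "T - {e}" and ?F' = "insert {u, v} (T - {e})"
  have "u \<noteq> v" using assms(2) by auto
  then have "{u, v} \<notin> ?F"
    using False assms(2-4) reach_edge[of u S v "tedge ?F"] unfolding tedge_def by blast
  have "card ?F' + 1 = card S"
  proof -
    have "card ?F' = Suc (card ?F)" using \<open>{u, v} \<notin> ?F\<close> finite_T by simp
    also have "Suc (card ?F) = card T" using assms(1) finite_T card_Suc_Diff1 by fastforce
    finally show ?thesis using card_T by simp
  qed
  moreover have "?F' \<subseteq> {{a, b} | a b. a \<in> S \<and> b \<in> S \<and> E a b}"
    using spanning_tree assms(3-5) unfolding spanning_tree_def by blast
  ultimately show ?thesis
    using connected_on_tedge_exchange[OF assms(1-4)] unfolding spanning_tree_def by blast
qed

end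

section \<open>Cycle edges and chords\<close>

lemma symp_cedge: "symp (cedge C)"
  unfolding cedge_def by (auto intro: sympI simp: insert_commute)

lemma symp_simple_graph: "simple_graph V E \<Longrightarrow> symp E"
  unfolding simple_graph_def by (auto intro: sympI)

lemma cedge_imp_edge:
  assumes "simple_graph V E" and "hamilton_cycle V E C" and "cedge C u v"
  shows "E u v"
proof -
  obtain i where "i < length C" and i: "{u, v} = {C ! i, C ! ((i + 1) mod length C)}"
    using assms(3) unfolding cedge_def by blast
  then have "E (C ! i) (C ! ((i + 1) mod length C))"
    using assms(2) unfolding hamilton_cycle_def by blast
  with i assms(1) show ?thesis
    unfolding simple_graph_def by (auto simp: doubleton_eq_iff)
qed

text \<open>Position of the index m on the path that remains of a cycle of length L after deleting the
  edge between the indices i and \<open>(i + 1) mod L\<close>, counted from \<open>(i + 1) mod L\<close>.\<close>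

definition cycle_rank :: "nat \<Rightarrow> nat \<Rightarrow> nat \<Rightarrow> nat" where
  "cycle_rank L i m = (if i < m then m - Suc i else m + L - Suc i)"

lemma Suc_mod_eq_if:
  assumes "(j::nat) < L"
  shows "(j + 1) mod L = (if j + 1 < L then j + 1 else 0)"
proof (cases "j + 1 < L")
  case False
  with assms have "j + 1 = L" by simp
  then show ?thesis by simp
qed simp

lemma cycle_rank_less: "i < L \<Longrightarrow> m < L \<Longrightarrow> cycle_rank L i m < L"
  unfolding cycle_rank_def by auto

lemma cycle_rank_inj: "i < L \<Longrightarrow> m < L \<Longrightarrow> m' < L \<Longrightarrow> cycle_rank L i m = cycle_rank L i m' \<Longrightarrow> m = m'"
  unfolding cycle_rank_def by (auto split: if_splits)

lemma cycle_rank_Suc: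
  "i < L \<Longrightarrow> j < L \<Longrightarrow> j \<noteq> i \<Longrightarrow> cycle_rank L i ((j + 1) mod L) = cycle_rank L i j + 1"
  unfolding Suc_mod_eq_if cycle_rank_def by (auto split: if_splits)

lemma cycle_rank_start: "i < L \<Longrightarrow> cycle_rank L i ((i + 1) mod L) = 0"
  unfolding Suc_mod_eq_if cycle_rank_def by (auto split: if_splits)

lemma cycle_rank_end: "i < L \<Longrightarrow> cycle_rank L i i = L - 1"
  unfolding cycle_rank_def by auto

definition cycle_prefix_in :: "'a list \<Rightarrow> nat \<Rightarrow> 'a set \<Rightarrow> nat \<Rightarrow> bool" where
  "cycle_prefix_in C i S n \<longleftrightarrow>
     (\<forall>m < length C. cycle_rank (length C) i m \<le> cycle_rank (length C) i n \<longrightarrow> C ! m \<in> S)"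

lemma cycle_prefix_in_step:
  assumes "distinct C" and "i < length C" and "n < length C" and "cycle_prefix_in C i S n"
    and "cedge C (C ! n) z" and "{C ! n, z} \<noteq> {C ! i, C ! ((i + 1) mod length C)}" and "z \<in> S"
  shows "\<exists>n' < length C. z = C ! n' \<and> cycle_prefix_in C i S n'"
proof -
  let ?L = "length C"
  have L: "(j + 1) mod ?L < ?L" for j using assms(2) by (intro mod_less_divisor) auto
  have index: "n = n'" if "n < ?L" "n' < ?L" "C ! n = C ! n'" for n n'
    using that assms(1) nth_eq_iff_index_eq by metis
  obtain j where j: "j < ?L" "{C ! n, z} = {C ! j, C ! ((j + 1) mod ?L)}" and "j \<noteq> i"
    using assms(5,6) unfolding cedge_def by blast
  have Suc_j: "cycle_rank ?L i ((j + 1) mod ?L) = cycle_rank ?L i j + 1"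
    using assms(2) j(1) \<open>j \<noteq> i\<close> by (rule cycle_rank_Suc)
  from j(2) consider "C ! n = C ! j" "z = C ! ((j + 1) mod ?L)"
    | "C ! n = C ! ((j + 1) mod ?L)" "z = C ! j"
    by (auto simp: doubleton_eq_iff)
  then show ?thesis
  proof cases
    case 1
    then have "n = j" using assms(3) index j(1) by blast
    have "cycle_prefix_in C i S ((j + 1) mod ?L)"
      unfolding cycle_prefix_in_def
    proof (intro allI impI)
      fix m assume "m < ?L" "cycle_rank ?L i m \<le> cycle_rank ?L i ((j + 1) mod ?L)"
      then consider "cycle_rank ?L i m \<le> cycle_rank ?L i n" | "m = (j + 1) mod ?L"
        using Suc_j \<open>n = j\<close> cycle_rank_inj[OF assms(2) _ L] by fastforce
      then show "C ! m \<in> S"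
        using assms(4,7) \<open>m < ?L\<close> 1 unfolding cycle_prefix_in_def by cases auto
    qed
    then show ?thesis using 1 L by blast
  next
    case 2
    then have "n = (j + 1) mod ?L" using assms(3) index L by blast
    then have "cycle_prefix_in C i S j" using assms(4) Suc_j unfolding cycle_prefix_in_def by auto
    then show ?thesis using 2 j(1) by blast
  qed
qed

lemma reach_cycle_prefix_in:
  assumes "distinct C" and "i < length C" and "q = C ! ((i + 1) mod length C)" and "q \<in> S"
    and "reach (\<lambda>x y. cedge C x y \<and> {x, y} \<noteq> {C ! i, q}) S q x"
  shows "\<exists>n < length C. x = C ! n \<and> cycle_prefix_in C i S n"
proof -
  let ?L = "length C"
  have "(q, x) \<in> {(a, b). a \<in> S \<and> b \<in> S \<and> cedge C a b \<and> {a, b} \<noteq> {C ! i, q}}\<^sup>*"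
    using assms(5) unfolding reach_def .
  then show ?thesis
  proof (induction rule: rtrancl_induct)
    case base
    have L: "(i + 1) mod ?L < ?L" using assms(2) by (intro mod_less_divisor) auto
    have "C ! m \<in> S" if "m < ?L" "cycle_rank ?L i m \<le> cycle_rank ?L i ((i + 1) mod ?L)" for m
    proof -
      have "cycle_rank ?L i m = cycle_rank ?L i ((i + 1) mod ?L)"
        using that(2) cycle_rank_start[OF assms(2)] by simp
      then have "m = (i + 1) mod ?L" using cycle_rank_inj[OF assms(2) that(1) L] by simp
      then show ?thesis using assms(3,4) by simp
    qed
    then have "cycle_prefix_in C i S ((i + 1) mod ?L)" unfolding cycle_prefix_in_def by blast
    then show ?case using assms(3) L by blast
  next
    case (step x z)
    then obtain n where n: "n < ?L" "x = C ! n" "cycle_prefix_in C i S n" by blast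
    from step.hyps(2) have "z \<in> S" "cedge C (C ! n) z" "{C ! n, z} \<noteq> {C ! i, C ! ((i + 1) mod ?L)}"
      using n(2) assms(3) by simp_all
    then show ?case using cycle_prefix_in_step[OF assms(1,2) n(1,3)] by blast
  qed
qed

lemma set_subset_if_reach_around_cedge:
  assumes "distinct C" and "cedge C u v" and "u \<in> S" and "v \<in> S"
    and "reach (\<lambda>x y. cedge C x y \<and> {x, y} \<noteq> {u, v}) S u v"
  shows "set C \<subseteq> S"
proof -
  let ?L = "length C"
  obtain i where i: "i < ?L" and uv: "{u, v} = {C ! i, C ! ((i + 1) mod ?L)}"
    using assms(2) unfolding cedge_def by blast
  let ?p = "C ! i" and ?q = "C ! ((i + 1) mod ?L)"
  let ?R = "\<lambda>x y. cedge C x y \<and> {x, y} \<noteq> {?p, ?q}"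
  have "symp ?R" by (rule sympI) (auto simp: insert_commute dest: sympD[OF symp_cedge])
  then have "reach ?R S ?q ?p"
    using assms(5) uv reach_sym[of ?R S] by (auto simp: doubleton_eq_iff)
  moreover have "?q \<in> S" using assms(3,4) uv by (auto simp: doubleton_eq_iff)
  ultimately obtain n where n: "n < ?L" "?p = C ! n" and "cycle_prefix_in C i S n"
    using reach_cycle_prefix_in[OF assms(1) i refl] by blast
  have "n = i" using n i assms(1) nth_eq_iff_index_eq by metis
  then have "\<forall>m < ?L. C ! m \<in> S"
    using \<open>cycle_prefix_in C i S n\<close> cycle_rank_end[OF i] cycle_rank_less[OF i]
    unfolding cycle_prefix_in_def by fastforce
  then show ?thesis by (auto simp: in_set_conv_nth)
qed

lemma set_subset_if_reach_without_chords:
  assumes "distinct C" and "cedge C u v" and "u \<in> S" and "v \<in> S" and "{u, v} \<notin> T"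
    and "reach (tedge (T - chords C T)) S u v"
  shows "set C \<subseteq> S"
proof -
  have "reach (\<lambda>x y. cedge C x y \<and> {x, y} \<noteq> {u, v}) S u v"
    using assms(6)
  proof (rule reach_mono)
    fix x y assume "tedge (T - chords C T) x y"
    then have "{x, y} \<in> T" "{x, y} \<notin> chords C T" unfolding tedge_def by auto
    then obtain a b where "{x, y} = {a, b}" "cedge C a b" unfolding chords_def by blast
    then have "cedge C x y" by (auto simp: doubleton_eq_iff dest: sympD[OF symp_cedge])
    with \<open>{x, y} \<in> T\<close> assms(5) show "cedge C x y \<and> {x, y} \<noteq> {u, v}" by auto
  qed simp
  then show ?thesis using set_subset_if_reach_around_cedge[OF assms(1-4)] by blast
qed

lemma min_chord_spanning_tree_cedge:
  assumes "simple_graph V E" and "hamilton_cycle V E C" and "S \<subseteq> V" and "S \<noteq> V"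
    and min: "min_chord_spanning_tree E C S T"
    and "u \<in> S" and "v \<in> S" and "cedge C u v"
  shows "{u, v} \<in> T"
proof (rule ccontr)
  assume uv_notin: "{u, v} \<notin> T"
  have "spanning_tree E S T" using min unfolding min_chord_spanning_tree_def by blast
  moreover have "finite S" using assms(1,3) finite_subset unfolding simple_graph_def by blast
  ultimately interpret finite_spanning_tree E S T by unfold_locales
  let ?Ch = "chords C T"
  have "distinct C" and "set C = V" using assms(2) unfolding hamilton_cycle_def by blast+
  then have "\<not> reach (tedge (T - ?Ch)) S u v"
    using set_subset_if_reach_without_chords[OF _ assms(8,6,7) uv_notin] assms(3,4) by blast
  then obtain e where e: "e \<in> ?Ch" and separates: "\<not> reach (tedge (T - {e})) S u v"
    using reach_Diff_edges[of ?Ch u v] assms(6,7) unfolding chords_def by blast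
  let ?T' = "insert {u, v} (T - {e})"
  have "spanning_tree E S ?T'"
    using spanning_tree_exchange[OF _ separates assms(6,7)] e cedge_imp_edge[OF assms(1,2,8)]
    unfolding chords_def by blast
  then have "card ?Ch \<le> card (chords C ?T')"
    using min unfolding min_chord_spanning_tree_def by blast
  moreover have "chords C ?T' = ?Ch - {e}"
    unfolding chords_def using assms(8) by blast
  moreover have "finite ?Ch" using finite_T unfolding chords_def by simp
  ultimately show False using e card_Diff1_less[of ?Ch e] by simp
qed

section \<open>Detaching a light subtree\<close>

text \<open>Every component of \<open>D - H\<close> is attached to H by an R-edge, because D is R-connected;
  so removing one of these components leaves the rest hanging on the connected set H.\<close>

lemma connected_on_Diff_component:
  assumes "symp R" and "symp E" and "\<And>a b. R a b \<Longrightarrow> E a b" and "connected_on R D"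
    and "connected_on E H" and "H \<subseteq> D"
  shows "connected_on E (D - component R (D - H) x)"
proof -
  let ?S = "component R (D - H) x"
  let ?W = "D - ?S"
  obtain c where "c \<in> H" using assms(5) unfolding connected_on_def by blast
  have "H \<subseteq> ?W" using assms(6) component_subset[of R "D - H" x] by blast
  have to_H: "reach E ?W y c" if "y \<in> H" for y
    using assms(5) \<open>c \<in> H\<close> that \<open>H \<subseteq> ?W\<close> unfolding connected_on_def
    by (blast intro: reach_mono)
  have "reach E ?W y c" if "y \<in> ?W" for y
  proof (cases "y \<in> H")
    case False
    let ?X = "component R (D - H) y"
    have "y \<in> ?X" using that False by (intro mem_component) blast
    have "?X \<noteq> D" using \<open>c \<in> H\<close> assms(6) component_subset[of R "D - H" y] by blast
    then obtain a b where ab: "a \<in> ?X" "b \<in> D" "b \<notin> ?X" "R a b"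
      using connected_on_closed_subset[OF assms(4) _ \<open>y \<in> ?X\<close>] component_subset[of R "D - H" y]
      by blast
    then have "b \<in> H" using component_closed[of a R "D - H" y b] by blast
    have "?X \<inter> ?S = {}"
    proof (rule equals0I)
      fix z assume "z \<in> ?X \<inter> ?S"
      then have "reach R (D - H) y z" "reach R (D - H) x z" unfolding component_def by auto
      then have "reach R (D - H) x y" using reach_trans reach_sym[OF assms(1)] by metis
      with that \<open>y \<in> ?X\<close> show False unfolding component_def by auto
    qed
    then have "?X \<subseteq> ?W" using component_subset[of R "D - H" y] by blast
    have "reach R (D - H) y a" using ab(1) unfolding component_def by simp
    from reach_closed_subset[OF this \<open>y \<in> ?X\<close> component_subset component_closed]
    have "reach R ?X y a" by simp
    then have "reach E ?W y a" by (rule reach_mono) (use \<open>?X \<subseteq> ?W\<close> assms(3) in auto)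
    moreover have "reach E ?W a b"
      using ab(1,4) \<open>b \<in> H\<close> \<open>?X \<subseteq> ?W\<close> \<open>H \<subseteq> ?W\<close> assms(3) by (intro reach_edge) auto
    ultimately show ?thesis using to_H[OF \<open>b \<in> H\<close>] reach_trans by metis
  qed (rule to_H)
  then show ?thesis
    using \<open>c \<in> H\<close> \<open>H \<subseteq> ?W\<close> reach_sym[OF assms(2)]
    by (intro connected_on_reachI[OF assms(2)]) blast+
qed

lemma (in finite_spanning_tree) tedge_imp_edge:
  assumes "symp E" and "tedge T a b"
  shows "E a b"
proof -
  obtain x y where "{a, b} = {x, y}" "E x y"
    using assms(2) spanning_tree unfolding tedge_def spanning_tree_def by blast
  then show ?thesis using sympD[OF assms(1)] by (auto simp: doubleton_eq_iff)
qed

lemma card_component_le_half_if_tree_center: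
  assumes "tree_center D T c" and "finite D" and "X \<subseteq> D - {c}" and "u \<in> X"
  shows "real (card (component (tedge T) X u)) \<le> real (card D) / 2"
proof -
  let ?K = "component (tedge T) (D - {c}) u"
  have "?K \<in> comps (tedge T) (D - {c})"
    using assms(3,4) by (intro component_in_comps) blast
  then have "real (card ?K) \<le> real (card D) / 2"
    using assms(1) unfolding tree_center_def by blast
  moreover have "finite ?K" using assms(2) by (intro finite_subset[OF component_subset]) simp
  then have "card (component (tedge T) X u) \<le> card ?K"
    using component_mono[OF assms(3)] by (rule card_mono)
  ultimately show ?thesis by linarith
qed

lemma light_subtree_cedge_closed:
  assumes sg: "simple_graph V E" and hc: "hamilton_cycle V E C" and "D \<subseteq> V" and "D \<noteq> V"
    and min: "min_chord_spanning_tree E C D T"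
    and a: "a \<in> component (tedge T) (D - component (cedge C) D c) u" and "b \<in> D" and "cedge C a b"
  shows "b \<in> component (tedge T) (D - component (cedge C) D c) u"
proof -
  let ?H = "component (cedge C) D c"
  have "a \<in> D - ?H" using a component_subset[of "tedge T" "D - ?H" u] by blast
  have "b \<notin> ?H"
  proof
    assume "b \<in> ?H"
    then have "a \<in> ?H"
      by (rule component_closed) (use \<open>a \<in> D - ?H\<close> sympD[OF symp_cedge \<open>cedge C a b\<close>] in auto)
    with \<open>a \<in> D - ?H\<close> show False by blast
  qed
  have "{a, b} \<in> T"
    using min_chord_spanning_tree_cedge[OF sg hc assms(3,4) min] \<open>a \<in> D - ?H\<close> assms(7,8) by blast
  moreover have "a \<noteq> b" using sg cedge_imp_edge[OF sg hc assms(8)] unfolding simple_graph_def by blast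
  ultimately have "tedge T a b" unfolding tedge_def by simp
  then show ?thesis using component_closed[OF a] \<open>b \<in> D\<close> \<open>b \<notin> ?H\<close> by blast
qed

lemma light_subtree:
  assumes sg: "simple_graph V E" and hc: "hamilton_cycle V E C" and "D \<subseteq> V" and "D \<noteq> V"
    and min: "min_chord_spanning_tree E C D T" and center: "tree_center D T c"
    and "u \<in> D" and light: "u \<notin> component (cedge C) D c"
  obtains S where "u \<in> S" and "S \<subseteq> D" and "connected_on E S" and "connected_on E (D - S)"
    and "real (card S) \<le> real (card D) / 2"
    and "\<And>a b. a \<in> S \<Longrightarrow> b \<in> D \<Longrightarrow> cedge C a b \<Longrightarrow> b \<in> S"
proof -
  have "finite D" using sg \<open>D \<subseteq> V\<close> finite_subset unfolding simple_graph_def by blast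
  moreover have "spanning_tree E D T" using min unfolding min_chord_spanning_tree_def by blast
  ultimately interpret finite_spanning_tree E D T by unfold_locales
  have "symp E" using sg by (rule symp_simple_graph)
  have tree_E: "E a b" if "tedge T a b" for a b using tedge_imp_edge[OF \<open>symp E\<close> that] .
  have "c \<in> D" using center unfolding tree_center_def by blast
  define H where "H = component (cedge C) D c"
  define S where "S = component (tedge T) (D - H) u"
  have "c \<in> H" unfolding H_def using \<open>c \<in> D\<close> by (rule mem_component)
  have "H \<subseteq> D" unfolding H_def by (rule component_subset)
  have "u \<in> D - H" using \<open>u \<in> D\<close> light unfolding H_def by blast
  then have "u \<in> S" unfolding S_def by (rule mem_component)
  have "S \<subseteq> D - H" unfolding S_def by (rule component_subset)
  have "connected_on E S"
    using connected_on_component[OF symp_tedge \<open>u \<in> D - H\<close>] tree_E unfolding S_def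
    by (rule connected_on_mono)
  have "connected_on (cedge C) H" unfolding H_def using symp_cedge \<open>c \<in> D\<close> by (rule connected_on_component)
  then have "connected_on E H" using cedge_imp_edge[OF sg hc] by (rule connected_on_mono)
  have "connected_on E (D - S)"
    unfolding S_def
  proof (rule connected_on_Diff_component)
    show "E a b" if "tedge T a b" for a b using that by (rule tree_E)
  qed (fact symp_tedge \<open>symp E\<close> connected_T \<open>connected_on E H\<close> \<open>H \<subseteq> D\<close>)+
  moreover have "real (card S) \<le> real (card D) / 2"
    unfolding S_def using center \<open>finite D\<close> _ \<open>u \<in> D - H\<close>
    by (rule card_component_le_half_if_tree_center) (use \<open>c \<in> H\<close> in blast)
  moreover have "b \<in> S" if "a \<in> S" "b \<in> D" "cedge C a b" for a b
    using light_subtree_cedge_closed[OF sg hc assms(3,4) min] that unfolding S_def H_def by blast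
  ultimately show ?thesis
    using that \<open>u \<in> S\<close> \<open>S \<subseteq> D - H\<close> \<open>connected_on E S\<close> by blast
qed

section \<open>Recombination by transfer\<close>

lemma UN_fun_upd_pair:
  assumes "i \<in> I" and "j \<in> I" and "i \<noteq> j" and "A \<union> B = P i \<union> P j"
  shows "(\<Union>l\<in>I. (P(i := A, j := B)) l) = (\<Union>l\<in>I. P l)"
proof -
  have split: "(\<Union>l\<in>I. f l) = f i \<union> f j \<union> (\<Union>l\<in>I - {i, j}. f l)" for f :: "'a \<Rightarrow> 'b set"
    using assms(1,2) by blast
  have "(\<Union>l\<in>I - {i, j}. (P(i := A, j := B)) l) = (\<Union>l\<in>I - {i, j}. P l)"
    by (intro SUP_cong) auto
  then show ?thesis
    unfolding split[of "P(i := A, j := B)"] split[of P] using assms(3,4) by simp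
qed

lemma is_BCP_fun_upd:
  assumes bcp: "is_BCP V E k s P" and "i < k" and "j < k" and "i \<noteq> j"
    and AB: "A \<union> B = P i \<union> P j" and "A \<inter> B = {}"
    and "A \<noteq> {}" and "connected_on E A" and "\<bar>real (card A) - real (card V) / real k\<bar> \<le> s"
    and "B \<noteq> {}" and "connected_on E B" and "\<bar>real (card B) - real (card V) / real k\<bar> \<le> s"
  shows "is_BCP V E k s (P(i := A, j := B))"
proof -
  let ?P = "P(i := A, j := B)"
  have districts: "\<forall>l<k. P l \<noteq> {} \<and> P l \<subseteq> V \<and> connected_on E (P l)
              \<and> \<bar>real (card (P l)) - real (card V) / real k\<bar> \<le> s"
    and disjoint: "\<forall>l<k. \<forall>l'<k. l \<noteq> l' \<longrightarrow> P l \<inter> P l' = {}"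
    and cover: "(\<Union>l<k. P l) = V"
    using bcp unfolding is_BCP_def by blast+
  have "A \<subseteq> V" "B \<subseteq> V" using AB districts \<open>i < k\<close> \<open>j < k\<close> by blast+
  then have districts': "\<forall>l<k. ?P l \<noteq> {} \<and> ?P l \<subseteq> V \<and> connected_on E (?P l)
              \<and> \<bar>real (card (?P l)) - real (card V) / real k\<bar> \<le> s"
    using districts assms(7-12) by auto
  have "P m \<inter> (A \<union> B) = {}" if "m < k" "m \<noteq> i" "m \<noteq> j" for m
    unfolding AB using disjoint that \<open>i < k\<close> \<open>j < k\<close> by blast
  then have "?P l \<inter> ?P l' = {}" if "l < k" "l' < k" "l \<noteq> l'" for l l'
    using disjoint that \<open>A \<inter> B = {}\<close> \<open>i \<noteq> j\<close> by (auto simp: Int_commute)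
  moreover have "(\<Union>l<k. ?P l) = V"
    using UN_fun_upd_pair[of i "{..<k}" j A B P] assms(2-5) cover by simp
  ultimately show ?thesis unfolding is_BCP_def using districts' by blast
qed

lemma recomb_move_transfer:
  assumes bcp: "is_BCP V E k s P" and "i < k" and "j < k" and "i \<noteq> j"
    and "S \<subseteq> P i" and "S \<noteq> {}"
    and "connected_on E (P i - S)" and "\<bar>real (card (P i - S)) - real (card V) / real k\<bar> \<le> s"
    and "connected_on E (P j \<union> S)" and "\<bar>real (card (P j \<union> S)) - real (card V) / real k\<bar> \<le> s"
  shows "recomb_move V E k s P i j (P(i := P i - S, j := P j \<union> S))"
proof -
  let ?P = "P(i := P i - S, j := P j \<union> S)"
  have disjoint: "\<forall>l<k. \<forall>l'<k. l \<noteq> l' \<longrightarrow> P l \<inter> P l' = {}" and "P j \<noteq> {}"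
    using bcp \<open>j < k\<close> unfolding is_BCP_def by blast+
  have "(P i - S) \<union> (P j \<union> S) = P i \<union> P j" using \<open>S \<subseteq> P i\<close> by blast
  moreover have "(P i - S) \<inter> (P j \<union> S) = {}" using disjoint assms(2-4) by blast
  moreover have "P i - S \<noteq> {}" using \<open>connected_on E (P i - S)\<close> unfolding connected_on_def by blast
  ultimately have "is_BCP V E k s ?P"
    using is_BCP_fun_upd[OF bcp assms(2-4)] assms(6-10) by blast
  moreover have "P j \<union> S \<notin> P ` {..<k}"
  proof
    assume "P j \<union> S \<in> P ` {..<k}"
    then obtain l where "l < k" "P j \<union> S = P l" by auto
    show False
    proof (cases "l = j")
      case True
      then have "S \<subseteq> P i \<inter> P j" using \<open>P j \<union> S = P l\<close> assms(5) by blast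
      then show False using disjoint assms(2-4,6) by blast
    next
      case False
      then have "P j \<subseteq> P j \<inter> P l" using \<open>P j \<union> S = P l\<close> by blast
      then show False using disjoint \<open>P j \<noteq> {}\<close> \<open>l < k\<close> \<open>j < k\<close> False by blast
    qed
  qed
  then have "?P ` {..<k} \<noteq> P ` {..<k}"
    using \<open>j < k\<close> by (metis fun_upd_same imageI lessThan_iff)
  ultimately show ?thesis
    unfolding recomb_move_def using assms(2-5) by auto
qed

lemma transfer_balanced:
  fixes m s :: real
  assumes "finite D" and "S \<subseteq> D" and "B \<inter> S = {}" and "finite B"
    and "\<bar>real (card D) - m\<bar> \<le> s" and "m \<le> s" and "real (card B) \<le> m"
    and "real (card S) \<le> real (card D) / 2"
  shows "\<bar>real (card (D - S)) - m\<bar> \<le> s" and "\<bar>real (card (B \<union> S)) - m\<bar> \<le> s"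
proof -
  have "card (D - S) \<le> card D" using assms(1) by (simp add: card_mono)
  then show "\<bar>real (card (D - S)) - m\<bar> \<le> s" using assms(5,6) by linarith
  have "finite S" using assms(1,2) by (rule finite_subset[rotated])
  then have "card (B \<union> S) = card B + card S"
    using assms(3,4) by (simp add: card_Un_disjoint)
  then show "\<bar>real (card (B \<union> S)) - m\<bar> \<le> s" using assms(5-8) by linarith
qed

lemma sum_less_if_two_summands_less:
  fixes g g' :: "'a \<Rightarrow> 'b::ordered_cancel_comm_monoid_add"
  assumes "finite I" and "i \<in> I" and "j \<in> I" and "i \<noteq> j"
    and "\<And>l. l \<in> I \<Longrightarrow> l \<noteq> i \<Longrightarrow> l \<noteq> j \<Longrightarrow> g' l = g l"
    and "g' i + g' j < g i + g j"
  shows "sum g' I < sum g I"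
proof -
  have split: "sum f I = (f i + f j) + sum f (I - {i, j})" for f :: "'a \<Rightarrow> 'b"
  proof -
    have "sum f I = f i + sum f (I - {i})" using assms(1,2) by (rule sum.remove)
    also have "sum f (I - {i}) = f j + sum f (I - {i} - {j})"
      using assms(1,3,4) by (intro sum.remove) auto
    also have "I - {i} - {j} = I - {i, j}" by blast
    finally show ?thesis by (simp add: add.assoc)
  qed
  have "sum g' (I - {i, j}) = sum g (I - {i, j})" using assms(5) by (intro sum.cong) auto
  then show ?thesis unfolding split[of g] split[of g'] using assms(6) by (simp add: add_strict_right_mono)
qed

lemma total_fragments_transfer_less:
  assumes "i < k" and "j < k" and "i \<noteq> j" and "finite (P i)" and "finite (P j)"
    and "S \<subseteq> P i" and closed: "\<And>a b. a \<in> S \<Longrightarrow> b \<in> P i \<Longrightarrow> cedge C a b \<Longrightarrow> b \<in> S"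
    and "u \<in> S" and "v \<in> P j" and "cedge C u v"
  shows "total_fragments C k (P(i := P i - S, j := P j \<union> S)) < total_fragments C k P"
  unfolding total_fragments_def
proof (rule sum_less_if_two_summands_less)
  have "card (fragments C (P i)) = card (fragments C S) + card (fragments C (P i - S))"
    unfolding fragments_def using symp_cedge assms(4,6) closed by (rule card_comps_split_closed)
  moreover have "card (fragments C (P j \<union> S)) < card (fragments C (P j)) + card (fragments C S)"
    unfolding fragments_def using symp_cedge assms(5) finite_subset[OF assms(6,4)] assms(9,8)
      sympD[OF symp_cedge assms(10)] by (rule card_comps_Un_edge_less)
  ultimately show "card (fragments C ((P(i := P i - S, j := P j \<union> S)) i))
      + card (fragments C ((P(i := P i - S, j := P j \<union> S)) j))
      < card (fragments C (P i)) + card (fragments C (P j))"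
    using \<open>i \<noteq> j\<close> by simp
qed (use assms(1-3) in auto)

lemma recomb_move_transfer_light_subtree:
  assumes sg: "simple_graph V E" and hc: "hamilton_cycle V E C"
    and "s \<ge> real (card V) / real k" and bcp: "is_BCP V E k s P"
    and "i < k" and "j < k" and "i \<noteq> j"
    and small: "real (card (P j)) \<le> real (card V) / real k"
    and min: "min_chord_spanning_tree E C (P i) T" and center: "tree_center (P i) T c"
    and "u \<in> P i" and light: "u \<notin> component (cedge C) (P i) c"
    and "v \<in> P j" and "cedge C u v"
  shows "\<exists>P'. recomb_move V E k s P i j P' \<and> total_fragments C k P' < total_fragments C k P"
proof -
  have "finite V" using sg unfolding simple_graph_def by blast
  have "P i \<subseteq> V" "P j \<subseteq> V" "P i \<inter> P j = {}"
    and balanced: "\<bar>real (card (P i)) - real (card V) / real k\<bar> \<le> s" "connected_on E (P j)"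
    using bcp \<open>i < k\<close> \<open>j < k\<close> \<open>i \<noteq> j\<close> unfolding is_BCP_def by blast+
  moreover have "P i \<noteq> V" using \<open>v \<in> P j\<close> \<open>P j \<subseteq> V\<close> \<open>P i \<inter> P j = {}\<close> by blast
  ultimately obtain S where "u \<in> S" "S \<subseteq> P i" "connected_on E S" "connected_on E (P i - S)"
    and half: "real (card S) \<le> real (card (P i)) / 2"
    and closed: "\<And>a b. a \<in> S \<Longrightarrow> b \<in> P i \<Longrightarrow> cedge C a b \<Longrightarrow> b \<in> S"
    using light_subtree[OF sg hc \<open>P i \<subseteq> V\<close> _ min center \<open>u \<in> P i\<close> light] by blast
  have "finite (P i)" "finite (P j)"
    using \<open>finite V\<close> \<open>P i \<subseteq> V\<close> \<open>P j \<subseteq> V\<close> finite_subset by blast+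
  have "P j \<inter> S = {}" using \<open>P i \<inter> P j = {}\<close> \<open>S \<subseteq> P i\<close> by blast
  note balanced_transfer = transfer_balanced[OF \<open>finite (P i)\<close> \<open>S \<subseteq> P i\<close> this \<open>finite (P j)\<close>
      balanced(1) assms(3) small half]
  have "E v u" using cedge_imp_edge[OF sg hc] sympD[OF symp_cedge \<open>cedge C u v\<close>] by blast
  with symp_simple_graph[OF sg] have "connected_on E (P j \<union> S)"
    using balanced(2) \<open>connected_on E S\<close> \<open>v \<in> P j\<close> \<open>u \<in> S\<close> by (intro connected_on_Un_edge)
  then have "recomb_move V E k s P i j (P(i := P i - S, j := P j \<union> S))"
    using recomb_move_transfer[OF bcp \<open>i < k\<close> \<open>j < k\<close> \<open>i \<noteq> j\<close> \<open>S \<subseteq> P i\<close>]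
      \<open>u \<in> S\<close> \<open>connected_on E (P i - S)\<close> balanced_transfer by blast
  moreover have "total_fragments C k (P(i := P i - S, j := P j \<union> S)) < total_fragments C k P"
    using total_fragments_transfer_less[OF \<open>i < k\<close> \<open>j < k\<close> \<open>i \<noteq> j\<close> \<open>finite (P i)\<close>
        \<open>finite (P j)\<close> \<open>S \<subseteq> P i\<close>] closed \<open>u \<in> S\<close> \<open>v \<in> P j\<close> \<open>cedge C u v\<close> by blast
  ultimately show ?thesis by blast
qed

theorem mainTheorem5:
  fixes V :: "'a set" and E :: "'a \<Rightarrow> 'a \<Rightarrow> bool" and C :: "'a list"
    and k :: nat and s :: real and P :: "nat \<Rightarrow> 'a set"
    and T :: "nat \<Rightarrow> 'a set set" and c :: "nat \<Rightarrow> 'a"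
  assumes "simple_graph V E"
    and "hamilton_cycle V E C"
    and "k \<ge> 2" and "k dvd card V"
    and "s \<ge> real (card V) / real k"
    and "is_BCP V E k s P"
    and "\<not> canonical C k P"
    and "\<forall>i < k. min_chord_spanning_tree E C (P i) (T i)"
    and "\<forall>i < k. tree_center (P i) (T i) (c i)"
    and "\<exists>i < k. real (card (P i)) > real (card V) / real k
           \<and> (\<exists>F \<in> fragments C (P i). c i \<notin> F
                \<and> (\<exists>u \<in> F. \<exists>j < k. real (card (P j)) \<le> real (card V) / real k
                      \<and> (\<exists>v \<in> P j. cedge C u v)))"
  shows "\<exists>i j P'. recomb_move V E k s P i j P'
           \<and> total_fragments C k P' < total_fragments C k P"
proof -
  obtain i F u j v where "i < k" and large: "real (card (P i)) > real (card V) / real k"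
    and F: "F \<in> fragments C (P i)" "c i \<notin> F" "u \<in> F" and "j < k"
    and small: "real (card (P j)) \<le> real (card V) / real k" and "v \<in> P j" and "cedge C u v"
    using assms(10) by blast
  have "i \<noteq> j" using large small by auto
  have "u \<in> P i" using F(1,3) comps_subset unfolding fragments_def by blast
  have "c i \<in> P i" using assms(9) \<open>i < k\<close> unfolding tree_center_def by blast
  with F have "u \<notin> component (cedge C) (P i) (c i)"
    unfolding fragments_def by (intro notin_component_if_comps[OF symp_cedge])
  then show ?thesis
    using recomb_move_transfer_light_subtree[OF assms(1,2,5,6) \<open>i < k\<close> \<open>j < k\<close> \<open>i \<noteq> j\<close> small]
      assms(8,9) \<open>i < k\<close> \<open>u \<in> P i\<close> \<open>v \<in> P j\<close> \<open>cedge C u v\<close> by blast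
qed

end
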